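(* Let $(G,u,v,\alpha,\beta)$ be a Guvab. The sequence $W(\mu_k,\nu_k)$ does not converge as $k\to\infty$ if and only if $G$ is bipartite, $\alpha=0$, $\beta=1$, and $$\sum_{w\in V(G)}(-1)^{d(v,w)}\,d(v,w)\,\deg(w)\ne0.$$
   Context: A Guvab is a tuple $(G,u,v,\alpha,\beta)$ where $G$ is a finite, connected, simple graph, $u,v\in V(G)$, and $\alpha,\beta\in[0,1]$ with $\alpha\le\beta$. A random walk on $G$ with starting vertex $w$ and laziness $\gamma$ is the Markov chain $R_0=w$ and, for $i\ge1$, $R_i=R_{i-1}$ with probability $\gamma$ and $R_i=t$ with probability $\frac{1-\gamma}{\deg(R_{i-1})}$ for each neighbor $t$ of $R_{i-1}$. $\mu_k$ is the distribution after $k$ steps of the walk from $u$ with laziness $\alpha$, and $\nu_k$ that of the walk from $v$ with laziness $\beta$. $W(\mu,\nu)$ is the Wasserstein ($L^1$ optimal transport) distance with respect to the graph distance $d$: the minimum over transportation plans (nonnegative $T$ on $V(G)\times V(G)$ with marginals $\mu,\nu$) of $\sum d(w_1,w_2)T(w_1,w_2)$. *)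

theory Defs
  imports "HOL-Analysis.Analysis"
begin

definition simple_graph :: "'a set \<Rightarrow> ('a \<Rightarrow> 'a \<Rightarrow> bool) \<Rightarrow> bool" where
  "simple_graph V E \<longleftrightarrow> finite V \<and> V \<noteq> {} \<and>
     (\<forall>x y. E x y \<longrightarrow> x \<in> V \<and> y \<in> V) \<and>
     (\<forall>x y. E x y \<longrightarrow> E y x) \<and> (\<forall>x. \<not> E x x)"

definition adj_rel :: "('a \<Rightarrow> 'a \<Rightarrow> bool) \<Rightarrow> ('a \<times> 'a) set" where
  "adj_rel E = {(x, y). E x y}"

definition connected_graph :: "'a set \<Rightarrow> ('a \<Rightarrow> 'a \<Rightarrow> bool) \<Rightarrow> bool" where
  "connected_graph V E \<longleftrightarrow> simple_graph V E \<and> (\<forall>x\<in>V. \<forall>y\<in>V. (x, y) \<in> (adj_rel E)\<^sup>*)"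

definition gdist :: "('a \<Rightarrow> 'a \<Rightarrow> bool) \<Rightarrow> 'a \<Rightarrow> 'a \<Rightarrow> nat" where
  "gdist E x y = (LEAST n. (x, y) \<in> (adj_rel E) ^^ n)"

definition deg :: "'a set \<Rightarrow> ('a \<Rightarrow> 'a \<Rightarrow> bool) \<Rightarrow> 'a \<Rightarrow> nat" where
  "deg V E w = card {t \<in> V. E w t}"

definition bipartite :: "'a set \<Rightarrow> ('a \<Rightarrow> 'a \<Rightarrow> bool) \<Rightarrow> bool" where
  "bipartite V E \<longleftrightarrow> (\<exists>c :: 'a \<Rightarrow> bool. \<forall>x\<in>V. \<forall>y\<in>V. E x y \<longrightarrow> c x \<noteq> c y)"

text \<open>One-step transition probability of the lazy random walk with laziness g.
  (An isolated vertex, which only occurs for the one-vertex graph, stays put.)\<close>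
definition trans_prob :: "'a set \<Rightarrow> ('a \<Rightarrow> 'a \<Rightarrow> bool) \<Rightarrow> real \<Rightarrow> 'a \<Rightarrow> 'a \<Rightarrow> real" where
  "trans_prob V E g s t =
     (if deg V E s = 0 then (if s = t then 1 else 0)
      else if s = t then g
      else if E s t then (1 - g) / real (deg V E s) else 0)"

fun walk_dist :: "'a set \<Rightarrow> ('a \<Rightarrow> 'a \<Rightarrow> bool) \<Rightarrow> real \<Rightarrow> 'a \<Rightarrow> nat \<Rightarrow> 'a \<Rightarrow> real" where
  "walk_dist V E g w 0 = (\<lambda>t. if t = w then 1 else 0)"
| "walk_dist V E g w (Suc k) =
     (\<lambda>t. \<Sum>s\<in>V. walk_dist V E g w k s * trans_prob V E g s t)"

definition transport_plan ::
  "'a set \<Rightarrow> ('a \<Rightarrow> real) \<Rightarrow> ('a \<Rightarrow> real) \<Rightarrow> ('a \<Rightarrow> 'a \<Rightarrow> real) \<Rightarrow> bool" where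
  "transport_plan V \<mu> \<nu> T \<longleftrightarrow>
     (\<forall>x\<in>V. \<forall>y\<in>V. T x y \<ge> 0) \<and>
     (\<forall>x\<in>V. (\<Sum>y\<in>V. T x y) = \<mu> x) \<and>
     (\<forall>y\<in>V. (\<Sum>x\<in>V. T x y) = \<nu> y)"

definition wasserstein ::
  "'a set \<Rightarrow> ('a \<Rightarrow> 'a \<Rightarrow> bool) \<Rightarrow> ('a \<Rightarrow> real) \<Rightarrow> ('a \<Rightarrow> real) \<Rightarrow> real" where
  "wasserstein V E \<mu> \<nu> =
     Inf {(\<Sum>x\<in>V. \<Sum>y\<in>V. real (gdist E x y) * T x y) | T. transport_plan V \<mu> \<nu> T}"

end

theory Submission
  imports Defs "HOL-Probability.Characteristic_Functions"
begin

(*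
  A lazy walk (0 < gamma < 1), and any walk with gamma < 1 on a non-bipartite graph, converges
  in l1 to the stationary distribution pi(x) = deg x / sum of degrees: some power of the
  transition matrix is entrywise positive, and Doeblin's argument makes it a strict
  contraction on signed measures of mass zero.  The walk with gamma = 1 never moves, and the
  walk with gamma = 0 on a bipartite graph alternates, converging along even and odd times to
  2 pi restricted to one colour class or the other.  Since W is Lipschitz in l1, W(mu_k, nu_k)
  converges iff its limits along even and odd k agree.  Cancelling the mass common to both
  arguments shows W(2 pi|A, pi) = W(pi|A, pi|B) = W(2 pi|B, pi), so the only divergent case is
  alpha = 0, beta = 1 on a bipartite graph, where the two limits W(2 pi|A, delta_v) and
  W(2 pi|B, delta_v) differ by a nonzero multiple of sum_w (-1)^d(v,w) d(v,w) deg w.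
*)

definition point_mass :: "'a \<Rightarrow> 'a \<Rightarrow> real" where
  "point_mass w t = (if t = w then 1 else 0)"

lemma sum_point_mass_mult:
  assumes "finite V" "w \<in> V"
  shows "(\<Sum>z\<in>V. point_mass w z * f z) = f w" and "(\<Sum>z\<in>V. f z * point_mass w z) = f w"
proof -
  have "(\<Sum>z\<in>V. point_mass w z * f z) = (\<Sum>z\<in>V. if z = w then f z else 0)"
    by (rule sum.cong) (auto simp: point_mass_def)
  then show "(\<Sum>z\<in>V. point_mass w z * f z) = f w" using assms by simp
  then show "(\<Sum>z\<in>V. f z * point_mass w z) = f w" by (simp add: mult.commute)
qed

lemma sum_point_mass:
  assumes "finite V" "w \<in> V"
  shows "(\<Sum>z\<in>V. point_mass w z) = 1"
  using sum_point_mass_mult(1)[OF assms, of "\<lambda>_. 1"] by simp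

lemma finite_pos_lower_bound:
  fixes f :: "'b \<Rightarrow> real"
  assumes "finite S" "\<forall>s\<in>S. 0 < f s"
  shows "\<exists>\<delta>>0. \<forall>s\<in>S. \<delta> \<le> f s"
proof (cases "S = {}")
  case False
  then show ?thesis using assms by (intro exI[of _ "Min (f ` S)"]) auto
qed (auto intro: exI[of _ 1])

lemma LIMSEQ_even_odd_subseqs:
  assumes "X \<longlonglongrightarrow> L"
  shows "(\<lambda>k. X (2 * k)) \<longlonglongrightarrow> L" and "(\<lambda>k. X (2 * k + 1)) \<longlonglongrightarrow> L"
  using LIMSEQ_linear[OF assms, of 2] LIMSEQ_linear[OF LIMSEQ_Suc[OF assms], of 2]
  by (simp_all add: mult.commute)

lemma convergent_iff_even_odd_limits:
  fixes X :: "nat \<Rightarrow> 'a :: t2_space"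
  assumes "(\<lambda>k. X (2 * k)) \<longlonglongrightarrow> a" "(\<lambda>k. X (2 * k + 1)) \<longlonglongrightarrow> b"
  shows "convergent X \<longleftrightarrow> a = b"
proof
  assume "convergent X"
  then obtain L where "X \<longlonglongrightarrow> L" unfolding convergent_def by blast
  then show "a = b" using LIMSEQ_even_odd_subseqs assms LIMSEQ_unique by metis
next
  assume "a = b"
  then show "convergent X" using limseq_even_odd assms unfolding convergent_def by blast
qed

section \<open>Graph distance and colourings\<close>

locale finite_connected_graph =
  fixes V :: "'a set" and E :: "'a \<Rightarrow> 'a \<Rightarrow> bool"
  assumes connected: "connected_graph V E"
begin

abbreviation "adj \<equiv> adj_rel E"
abbreviation "d \<equiv> gdist E"

lemma finite_V: "finite V" and V_nonempty: "V \<noteq> {}" and edge_in_V: "E x y \<Longrightarrow> x \<in> V \<and> y \<in> V"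
  and edge_sym: "E x y \<Longrightarrow> E y x" and edge_irrefl: "\<not> E x x"
  using connected unfolding connected_graph_def simple_graph_def by blast+

lemma adj_iff [simp]: "(x, y) \<in> adj \<longleftrightarrow> E x y"
  by (simp add: adj_rel_def)

lemma relpow_adj_sym: "(x, y) \<in> adj ^^ n \<Longrightarrow> (y, x) \<in> adj ^^ n"
proof (induction n arbitrary: y)
  case (Suc n)
  then obtain z where "(x, z) \<in> adj ^^ n" "E z y" by (auto elim: relpow_Suc_E)
  then show ?case using Suc.IH edge_sym by (meson adj_iff relpow_Suc_I2)
qed simp

lemma relpow_adj_gdist: "x \<in> V \<Longrightarrow> y \<in> V \<Longrightarrow> (x, y) \<in> adj ^^ d x y"
  using connected unfolding gdist_def connected_graph_def by (metis LeastI_ex rtrancl_power)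

lemma gdist_le: "(x, y) \<in> adj ^^ n \<Longrightarrow> d x y \<le> n"
  unfolding gdist_def by (rule Least_le)

lemma gdist_self [simp]: "d x x = 0"
  using gdist_le[of x x 0] by simp

lemma gdist_sym: "x \<in> V \<Longrightarrow> y \<in> V \<Longrightarrow> d x y = d y x"
  by (meson antisym gdist_le relpow_adj_gdist relpow_adj_sym)

lemma gdist_triangle: "x \<in> V \<Longrightarrow> y \<in> V \<Longrightarrow> z \<in> V \<Longrightarrow> d x z \<le> d x y + d y z"
  by (meson gdist_le relpow_adj_gdist relpow_trans)

lemma gdist_eq_0_imp_eq: "x \<in> V \<Longrightarrow> y \<in> V \<Longrightarrow> d x y = 0 \<Longrightarrow> x = y"
  using relpow_adj_gdist[of x y] by simp

definition diam :: nat where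
  "diam = Max (case_prod d ` (V \<times> V))"

lemma gdist_le_diam: "x \<in> V \<Longrightarrow> y \<in> V \<Longrightarrow> d x y \<le> diam"
  unfolding diam_def using finite_V by (intro Max_ge) auto

lemma relpow_adj_add_even: "(x, y) \<in> adj ^^ n \<Longrightarrow> E y z \<Longrightarrow> (x, y) \<in> adj ^^ (n + 2 * j)"
proof (induction j)
  case (Suc j)
  have "(y, y) \<in> adj ^^ 2" using Suc.prems(2) edge_sym by (auto simp: numeral_2_eq_2 relcomp.simps)
  then show ?case using Suc relpow_trans by (fastforce simp: algebra_simps)
qed simp

definition two_colouring :: "('a \<Rightarrow> bool) \<Rightarrow> bool" where
  "two_colouring c \<longleftrightarrow> (\<forall>x\<in>V. \<forall>y\<in>V. E x y \<longrightarrow> c x \<noteq> c y)"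

lemma bipartite_iff_two_colouring: "bipartite V E \<longleftrightarrow> (\<exists>c. two_colouring c)"
  unfolding bipartite_def two_colouring_def ..

lemma relpow_adj_colour_parity:
  assumes c: "two_colouring c" and "x \<in> V"
  shows "(x, y) \<in> adj ^^ n \<Longrightarrow> c x = c y \<longleftrightarrow> even n"
proof (induction n arbitrary: y)
  case (Suc n)
  then obtain z where z: "(x, z) \<in> adj ^^ n" "E z y" by (auto elim: relpow_Suc_E)
  then have "c z \<noteq> c y" using c edge_in_V unfolding two_colouring_def by blast
  with Suc.IH[OF z(1)] show ?case by auto
qed simp

lemma colour_eq_iff_even_gdist:
  "two_colouring c \<Longrightarrow> x \<in> V \<Longrightarrow> y \<in> V \<Longrightarrow> c x = c y \<longleftrightarrow> even (d x y)"
  using relpow_adj_colour_parity relpow_adj_gdist by blast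

lemma odd_closed_walk_if_not_bipartite:
  assumes "\<not> bipartite V E" "w \<in> V"
  shows "\<exists>L. odd L \<and> (w, w) \<in> adj ^^ L"
proof -
  have "\<not> two_colouring (\<lambda>x. even (d w x))"
    using assms(1) bipartite_iff_two_colouring by blast
  then obtain x y where xy: "x \<in> V" "y \<in> V" "E x y" "even (d w x) = even (d w y)"
    unfolding two_colouring_def by blast
  have "(w, x) \<in> adj ^^ d w x" "(x, y) \<in> adj ^^ 1" "(y, w) \<in> adj ^^ d w y"
    using relpow_adj_gdist relpow_adj_sym assms(2) xy by auto
  then have "(w, w) \<in> adj ^^ (d w x + 1 + d w y)" by (meson relpow_trans)
  moreover have "odd (d w x + 1 + d w y)" using xy(4) by simp
  ultimately show ?thesis by blast
qed

lemma walk_dist_single_vertex: "V = {w} \<Longrightarrow> walk_dist V E g w k = point_mass w"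
proof (induction k)
  case (Suc k)
  have "deg V E w = 0" using Suc.prems edge_irrefl unfolding deg_def by simp
  then show ?case using Suc by (auto simp: trans_prob_def point_mass_def)
qed (auto simp: point_mass_def)

section \<open>Optimal transport on a finite graph\<close>

definition cost :: "('a \<Rightarrow> 'a \<Rightarrow> real) \<Rightarrow> real" where
  "cost T = (\<Sum>x\<in>V. \<Sum>y\<in>V. real (d x y) * T x y)"

abbreviation "plan \<equiv> transport_plan V"
abbreviation "W \<equiv> wasserstein V E"

lemma wasserstein_eq_Inf_cost: "W \<mu> \<nu> = Inf (cost ` Collect (plan \<mu> \<nu>))"
  unfolding wasserstein_def cost_def by (rule arg_cong[where f = Inf]) blast

lemma cost_nonneg: "plan \<mu> \<nu> T \<Longrightarrow> 0 \<le> cost T"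
  unfolding cost_def transport_plan_def by (auto intro!: sum_nonneg)

lemma wasserstein_le_cost: "plan \<mu> \<nu> T \<Longrightarrow> W \<mu> \<nu> \<le> cost T"
  unfolding wasserstein_eq_Inf_cost by (rule cInf_lower) (auto intro!: bdd_belowI[of _ 0] cost_nonneg)

lemma wasserstein_greatest:
  "plan \<mu> \<nu> T\<^sub>0 \<Longrightarrow> (\<And>T. plan \<mu> \<nu> T \<Longrightarrow> c \<le> cost T) \<Longrightarrow> c \<le> W \<mu> \<nu>"
  unfolding wasserstein_eq_Inf_cost by (rule cInf_greatest) auto

lemma wasserstein_nonneg: "plan \<mu> \<nu> T \<Longrightarrow> 0 \<le> W \<mu> \<nu>"
  using wasserstein_greatest cost_nonneg by blast

lemma transport_plan_cong:
  "(\<And>x. x \<in> V \<Longrightarrow> \<mu> x = \<mu>' x) \<Longrightarrow> (\<And>x. x \<in> V \<Longrightarrow> \<nu> x = \<nu>' x) \<Longrightarrow> plan \<mu> \<nu> = plan \<mu>' \<nu>'"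
  unfolding transport_plan_def by auto

lemma wasserstein_cong:
  assumes "\<And>x. x \<in> V \<Longrightarrow> \<mu> x = \<mu>' x" "\<And>x. x \<in> V \<Longrightarrow> \<nu> x = \<nu>' x"
  shows "W \<mu> \<nu> = W \<mu>' \<nu>'"
proof -
  have "plan \<mu> \<nu> = plan \<mu>' \<nu>'" using assms by (rule transport_plan_cong)
  then show ?thesis unfolding wasserstein_def by simp
qed

lemma transport_plan_exists:
  assumes "\<forall>x\<in>V. 0 \<le> \<mu> x" "\<forall>x\<in>V. 0 \<le> \<nu> x" "sum \<mu> V = sum \<nu> V"
  shows "\<exists>T. plan \<mu> \<nu> T"
proof (cases "sum \<nu> V = 0")
  case True
  then have "\<forall>x\<in>V. \<nu> x = 0" "\<forall>x\<in>V. \<mu> x = 0"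
    using assms finite_V sum_nonneg_eq_0_iff by metis+
  then have "plan \<mu> \<nu> (\<lambda>x y. 0)" unfolding transport_plan_def by auto
  then show ?thesis by blast
next
  case False
  have "plan \<mu> \<nu> (\<lambda>x y. \<mu> x * \<nu> y / sum \<nu> V)"
    unfolding transport_plan_def using assms False sum_nonneg[of V \<nu>]
    by (simp add: sum_divide_distrib[symmetric] sum_distrib_left[symmetric]
        sum_distrib_right[symmetric])
  then show ?thesis by blast
qed

lemma wasserstein_sym: "W \<mu> \<nu> = W \<nu> \<mu>"
proof -
  have transpose: "plan \<mu>' \<nu>' T \<Longrightarrow> plan \<nu>' \<mu>' (\<lambda>x y. T y x)" for \<mu>' \<nu>' T
    unfolding transport_plan_def by auto
  have "cost (\<lambda>x y. T y x) = cost T" for T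
    unfolding cost_def by (subst sum.swap) (auto intro!: sum.cong simp: gdist_sym)
  then have "cost ` Collect (plan \<mu> \<nu>) = cost ` Collect (plan \<nu> \<mu>)"
    using transpose by (auto simp: image_iff) metis+
  then show ?thesis unfolding wasserstein_eq_Inf_cost by simp
qed

lemma wasserstein_self: "\<forall>x\<in>V. 0 \<le> \<mu> x \<Longrightarrow> W \<mu> \<mu> = 0"
proof -
  assume "\<forall>x\<in>V. 0 \<le> \<mu> x"
  then have T: "plan \<mu> \<mu> (\<lambda>x y. if x = y then \<mu> x else 0)"
    unfolding transport_plan_def using finite_V by auto
  have "cost (\<lambda>x y. if x = y then \<mu> x else 0) = 0"
    unfolding cost_def by (auto intro!: sum.neutral)
  then show ?thesis using wasserstein_le_cost[OF T] wasserstein_nonneg[OF T] by linarith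
qed

lemma transport_plan_point_mass_iff:
  assumes \<mu>: "\<forall>x\<in>V. 0 \<le> \<mu> x" "sum \<mu> V = 1" and v: "v \<in> V"
  shows "plan \<mu> (point_mass v) T \<longleftrightarrow> (\<forall>x\<in>V. \<forall>y\<in>V. T x y = \<mu> x * point_mass v y)"
proof
  assume T: "plan \<mu> (point_mass v) T"
  have off: "T x y = 0" if "x \<in> V" "y \<in> V" "y \<noteq> v" for x y
  proof -
    have "(\<Sum>x\<in>V. T x y) = 0" using T that unfolding transport_plan_def point_mass_def by auto
    then show ?thesis using T that finite_V sum_nonneg_eq_0_iff[of V "\<lambda>x. T x y"]
      unfolding transport_plan_def by auto
  qed
  have "T x v = \<mu> x" if "x \<in> V" for x
  proof -
    have "\<mu> x = (\<Sum>y\<in>V. T x y)" using T that unfolding transport_plan_def by auto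
    also have "\<dots> = (\<Sum>y\<in>V. T x y * point_mass v y)"
      using that off by (intro sum.cong) (auto simp: point_mass_def)
    also have "\<dots> = T x v" by (rule sum_point_mass_mult(2)[OF finite_V v])
    finally show ?thesis by simp
  qed
  then show "\<forall>x\<in>V. \<forall>y\<in>V. T x y = \<mu> x * point_mass v y"
    using off by (auto simp: point_mass_def)
next
  assume "\<forall>x\<in>V. \<forall>y\<in>V. T x y = \<mu> x * point_mass v y"
  then show "plan \<mu> (point_mass v) T"
    using \<mu> v finite_V unfolding transport_plan_def
    by (simp add: sum_point_mass_mult sum_point_mass sum_distrib_left[symmetric]
        sum_distrib_right[symmetric] point_mass_def)
qed

lemma wasserstein_point_mass:
  assumes \<mu>: "\<forall>x\<in>V. 0 \<le> \<mu> x" "sum \<mu> V = 1" and v: "v \<in> V"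
  shows "W \<mu> (point_mass v) = (\<Sum>x\<in>V. \<mu> x * real (d x v))"
proof -
  have cost: "cost T = (\<Sum>x\<in>V. \<mu> x * real (d x v))" if "plan \<mu> (point_mass v) T" for T
  proof -
    have "cost T = (\<Sum>x\<in>V. \<Sum>y\<in>V. (real (d x y) * \<mu> x) * point_mass v y)"
      unfolding cost_def using that transport_plan_point_mass_iff[OF assms] by (auto intro!: sum.cong)
    then show ?thesis using sum_point_mass_mult(2)[OF finite_V v] by simp (simp add: mult.commute)
  qed
  have T: "plan \<mu> (point_mass v) (\<lambda>x y. \<mu> x * point_mass v y)"
    using transport_plan_point_mass_iff[OF assms] by simp
  show ?thesis
  proof (rule antisym)
    show "W \<mu> (point_mass v) \<le> (\<Sum>x\<in>V. \<mu> x * real (d x v))"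
      using wasserstein_le_cost[OF T] cost[OF T] by simp
    show "(\<Sum>x\<in>V. \<mu> x * real (d x v)) \<le> W \<mu> (point_mass v)"
      by (rule wasserstein_greatest[OF T]) (simp add: cost)
  qed
qed

lemma transport_plan_remove_diagonal:
  assumes x: "x \<in> V" and a: "a \<le> T x x"
    and T: "plan (\<lambda>y. \<mu> y + a * point_mass x y) (\<lambda>y. \<nu> y + a * point_mass x y) T"
  defines "S \<equiv> \<lambda>z y. T z y - a * point_mass x z * point_mass x y"
  shows "plan \<mu> \<nu> S" and "cost S = cost T"
proof -
  have "(\<Sum>y\<in>V. S z y) = \<mu> z" if "z \<in> V" for z
    using T that x finite_V unfolding S_def transport_plan_def
    by (simp add: sum_subtractf sum_point_mass sum_distrib_left[symmetric])
  moreover have "(\<Sum>z\<in>V. S z y) = \<nu> y" if "y \<in> V" for y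
    using T that x finite_V unfolding S_def transport_plan_def
    by (simp add: sum_subtractf sum_point_mass sum_distrib_left[symmetric]
        sum_distrib_right[symmetric])
  moreover have "0 \<le> S z y" if "z \<in> V" "y \<in> V" for z y
    using T that a unfolding S_def transport_plan_def point_mass_def by auto
  ultimately show "plan \<mu> \<nu> S" unfolding transport_plan_def by blast
  show "cost S = cost T"
    unfolding cost_def S_def by (intro sum.cong refl) (auto simp: point_mass_def)
qed

text \<open>If the diagonal entry at \<open>x\<close> vanishes, the surplus \<open>e\<close> at \<open>x\<close> is cancelled by
  removing the fractions \<open>e/R\<close> of the mass leaving \<open>x\<close> and \<open>e/C\<close> of the mass entering \<open>x\<close>,
  and sending the latter directly to the destinations of the former; by the triangle
  inequality through \<open>x\<close> this does not increase the cost.\<close>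

context
  fixes x :: 'a and e :: real and \<mu> \<nu> :: "'a \<Rightarrow> real" and T :: "'a \<Rightarrow> 'a \<Rightarrow> real"
    and R C :: real and S :: "'a \<Rightarrow> 'a \<Rightarrow> real"
  assumes x: "x \<in> V" and e: "0 < e" and \<mu>: "\<forall>y\<in>V. 0 \<le> \<mu> y" and \<nu>: "\<forall>y\<in>V. 0 \<le> \<nu> y"
    and T: "plan (\<lambda>y. \<mu> y + e * point_mass x y) (\<lambda>y. \<nu> y + e * point_mass x y) T"
    and Txx: "T x x = 0"
  defines "R \<equiv> \<mu> x + e" and "C \<equiv> \<nu> x + e"
    and "S \<equiv> \<lambda>z y. T z y - point_mass x z * T x y * (e / R)
      - point_mass x y * T z x * (e / C) + T z x * T x y * (e / (R * C))"
begin

lemma reroute_masses: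
  shows "e \<le> R" "0 < R" "e \<le> C" "0 < C"
    and "(\<Sum>y\<in>V. T x y) = R" "(\<Sum>z\<in>V. T z x) = C"
    and "z \<in> V \<Longrightarrow> y \<in> V \<Longrightarrow> 0 \<le> T z y"
  using x \<mu> \<nu> e T unfolding R_def C_def transport_plan_def by (auto simp: point_mass_def)

lemma reroute_plan: "plan \<mu> \<nu> S"
proof -
  note masses = reroute_masses
  have "(\<Sum>y\<in>V. S z y) = \<mu> z" if z: "z \<in> V" for z
  proof -
    have "(\<Sum>y\<in>V. S z y) = (\<Sum>y\<in>V. T z y) - point_mass x z * (e / R) * (\<Sum>y\<in>V. T x y)
        - T z x * (e / C) * (\<Sum>y\<in>V. point_mass x y) + T z x * (e / (R * C)) * (\<Sum>y\<in>V. T x y)"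
      unfolding S_def
      by (simp add: sum_subtractf sum.distrib sum_distrib_left sum_divide_distrib algebra_simps)
    also have "\<dots> = \<mu> z"
      using T z masses sum_point_mass[OF finite_V x] unfolding transport_plan_def
      by (simp add: field_simps)
    finally show ?thesis .
  qed
  moreover have "(\<Sum>z\<in>V. S z y) = \<nu> y" if y: "y \<in> V" for y
  proof -
    have "(\<Sum>z\<in>V. S z y) = (\<Sum>z\<in>V. T z y) - T x y * (e / R) * (\<Sum>z\<in>V. point_mass x z)
        - point_mass x y * (e / C) * (\<Sum>z\<in>V. T z x) + T x y * (e / (R * C)) * (\<Sum>z\<in>V. T z x)"
      unfolding S_def
      by (simp add: sum_subtractf sum.distrib sum_distrib_left sum_divide_distrib algebra_simps)
    also have "\<dots> = \<nu> y"
      using T y masses sum_point_mass[OF finite_V x] unfolding transport_plan_def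
      by (simp add: field_simps)
    finally show ?thesis .
  qed
  moreover have "0 \<le> S z y" if "z \<in> V" "y \<in> V" for z y
  proof -
    have "T x y * (e / R) \<le> T x y" "T z x * (e / C) \<le> T z x"
      using masses that x by (intro mult_left_le; simp)+
    moreover have "0 \<le> T z x * T x y * (e / (R * C))"
      using masses that x e by simp
    ultimately show ?thesis
      unfolding S_def point_mass_def using masses(7) that Txx by auto
  qed
  ultimately show ?thesis unfolding transport_plan_def by blast
qed

lemma reroute_cost_eq:
  "cost S = cost T - (\<Sum>y\<in>V. real (d x y) * T x y) * (e / R) - (\<Sum>z\<in>V. real (d z x) * T z x) * (e / C)
    + (\<Sum>z\<in>V. \<Sum>y\<in>V. real (d z y) * (T z x * T x y)) * (e / (R * C))"
proof -
  have "(\<Sum>z\<in>V. \<Sum>y\<in>V. real (d z y) * (point_mass x z * T x y * (e / R)))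
      = (\<Sum>z\<in>V. point_mass x z * (\<Sum>y\<in>V. real (d z y) * T x y * (e / R)))"
    by (simp add: sum_distrib_left mult_ac)
  also have "\<dots> = (\<Sum>y\<in>V. real (d x y) * T x y) * (e / R)"
    unfolding sum_point_mass_mult(1)[OF finite_V x] by (simp add: sum_distrib_right sum_divide_distrib)
  finally have out_cost: "(\<Sum>z\<in>V. \<Sum>y\<in>V. real (d z y) * (point_mass x z * T x y * (e / R)))
      = (\<Sum>y\<in>V. real (d x y) * T x y) * (e / R)" .
  have "(\<Sum>z\<in>V. \<Sum>y\<in>V. real (d z y) * (point_mass x y * T z x * (e / C)))
      = (\<Sum>z\<in>V. \<Sum>y\<in>V. (real (d z y) * T z x * (e / C)) * point_mass x y)"
    by (simp add: mult_ac)
  also have "\<dots> = (\<Sum>z\<in>V. real (d z x) * T z x) * (e / C)"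
    unfolding sum_point_mass_mult(2)[OF finite_V x] by (simp add: sum_distrib_right sum_divide_distrib)
  finally have in_cost: "(\<Sum>z\<in>V. \<Sum>y\<in>V. real (d z y) * (point_mass x y * T z x * (e / C)))
      = (\<Sum>z\<in>V. real (d z x) * T z x) * (e / C)" .
  have through_cost: "(\<Sum>z\<in>V. \<Sum>y\<in>V. real (d z y) * (T z x * T x y * (e / (R * C))))
      = (\<Sum>z\<in>V. \<Sum>y\<in>V. real (d z y) * (T z x * T x y)) * (e / (R * C))"
    by (simp add: sum_distrib_right sum_divide_distrib mult.assoc)
  show ?thesis
    unfolding cost_def S_def
    by (simp only: right_diff_distrib distrib_left sum_subtractf sum.distrib
        out_cost in_cost through_cost)
qed

lemma reroute_cost_le: "cost S \<le> cost T"
proof -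
  note masses = reroute_masses
  define A where "A = (\<Sum>y\<in>V. real (d x y) * T x y)"
  define B where "B = (\<Sum>z\<in>V. real (d z x) * T z x)"
  define Q where "Q = (\<Sum>z\<in>V. \<Sum>y\<in>V. real (d z y) * (T z x * T x y))"
  have "Q \<le> (\<Sum>z\<in>V. \<Sum>y\<in>V. (real (d z x) + real (d x y)) * (T z x * T x y))"
    unfolding Q_def using gdist_triangle x masses(7)
    by (intro sum_mono mult_right_mono) (auto simp flip: of_nat_add)
  also have "\<dots> = (\<Sum>z\<in>V. \<Sum>y\<in>V. (real (d z x) * T z x) * T x y)
      + (\<Sum>z\<in>V. \<Sum>y\<in>V. T z x * (real (d x y) * T x y))"
    by (simp add: sum.distrib[symmetric] algebra_simps)
  also have "\<dots> = B * R + C * A"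
    unfolding A_def B_def
    by (simp add: sum_distrib_left[symmetric] sum_distrib_right[symmetric] masses(5,6))
  finally have "Q * (e / (R * C)) \<le> (B * R + C * A) * (e / (R * C))"
    using masses e by (intro mult_right_mono) auto
  also have "\<dots> = A * (e / R) + B * (e / C)"
    using masses by (simp add: field_simps)
  finally show ?thesis using reroute_cost_eq unfolding A_def B_def Q_def by simp
qed

end

lemma transport_plan_cancel_point:
  assumes x: "x \<in> V" and c: "0 \<le> c" and \<mu>: "\<forall>y\<in>V. 0 \<le> \<mu> y" and \<nu>: "\<forall>y\<in>V. 0 \<le> \<nu> y"
    and T: "plan (\<lambda>y. \<mu> y + c * point_mass x y) (\<lambda>y. \<nu> y + c * point_mass x y) T"
  shows "\<exists>S. plan \<mu> \<nu> S \<and> cost S \<le> cost T"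
proof (cases "c \<le> T x x")
  case True
  then show ?thesis using transport_plan_remove_diagonal[OF x True T] by fastforce
next
  case False
  define e where "e = c - T x x"
  have e: "0 < e" using False e_def by simp
  have "plan (\<lambda>y. (\<mu> y + e * point_mass x y) + T x x * point_mass x y)
      (\<lambda>y. (\<nu> y + e * point_mass x y) + T x x * point_mass x y) T"
    using T by (simp add: e_def algebra_simps)
  from transport_plan_remove_diagonal[OF x order_refl this]
  obtain S where "plan (\<lambda>y. \<mu> y + e * point_mass x y) (\<lambda>y. \<nu> y + e * point_mass x y) S"
    "cost S = cost T" "S x x = 0"
    by (fastforce simp: point_mass_def)
  then show ?thesis using reroute_plan[OF x e \<mu> \<nu>] reroute_cost_le[OF x e \<mu> \<nu>] by fastforce
qed

lemma transport_plan_cancel: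
  assumes \<rho>: "\<forall>y\<in>V. 0 \<le> \<rho> y" and \<mu>: "\<forall>y\<in>V. 0 \<le> \<mu> y" and \<nu>: "\<forall>y\<in>V. 0 \<le> \<nu> y"
    and T: "plan (\<lambda>y. \<mu> y + \<rho> y) (\<lambda>y. \<nu> y + \<rho> y) T"
  shows "\<exists>S. plan \<mu> \<nu> S \<and> cost S \<le> cost T"
proof -
  have "\<exists>S. plan \<mu> \<nu> S \<and> cost S \<le> cost T"
    if "F \<subseteq> V" "\<forall>y\<in>V. 0 \<le> \<mu> y" "\<forall>y\<in>V. 0 \<le> \<nu> y"
      "plan (\<lambda>y. \<mu> y + (if y \<in> F then \<rho> y else 0)) (\<lambda>y. \<nu> y + (if y \<in> F then \<rho> y else 0)) T"
    for F \<mu> \<nu> T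
    using finite_subset[OF that(1) finite_V] that
  proof (induction F arbitrary: \<mu> \<nu> T rule: finite_induct)
    case (insert x F)
    define \<mu>' where "\<mu>' y = \<mu> y + (if y \<in> F then \<rho> y else 0)" for y
    define \<nu>' where "\<nu>' y = \<nu> y + (if y \<in> F then \<rho> y else 0)" for y
    have x: "x \<in> V" using insert.prems(1) by simp
    have "plan (\<lambda>y. \<mu>' y + \<rho> x * point_mass x y) (\<lambda>y. \<nu>' y + \<rho> x * point_mass x y) T"
      using insert.prems(4) insert.hyps(2) unfolding \<mu>'_def \<nu>'_def point_mass_def
      by (subst transport_plan_cong) auto
    moreover have "\<forall>y\<in>V. 0 \<le> \<mu>' y" "\<forall>y\<in>V. 0 \<le> \<nu>' y"
      using \<rho> insert.prems unfolding \<mu>'_def \<nu>'_def by auto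
    ultimately obtain S where "plan \<mu>' \<nu>' S" "cost S \<le> cost T"
      using transport_plan_cancel_point[OF x] \<rho> x by blast
    then show ?case
      using insert.IH[of \<mu> \<nu> S] insert.prems unfolding \<mu>'_def \<nu>'_def by fastforce
  qed auto
  moreover have "plan (\<lambda>y. \<mu> y + (if y \<in> V then \<rho> y else 0)) (\<lambda>y. \<nu> y + (if y \<in> V then \<rho> y else 0)) T"
    using T by (subst transport_plan_cong) auto
  ultimately show ?thesis using \<mu> \<nu> by blast
qed

lemma wasserstein_add_common:
  assumes \<rho>: "\<forall>y\<in>V. 0 \<le> \<rho> y" and \<mu>: "\<forall>y\<in>V. 0 \<le> \<mu> y" and \<nu>: "\<forall>y\<in>V. 0 \<le> \<nu> y"
    and mass: "sum \<mu> V = sum \<nu> V"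
  shows "W (\<lambda>y. \<mu> y + \<rho> y) (\<lambda>y. \<nu> y + \<rho> y) = W \<mu> \<nu>"
proof (rule antisym)
  obtain T\<^sub>0 where T\<^sub>0: "plan \<mu> \<nu> T\<^sub>0" using transport_plan_exists[OF \<mu> \<nu> mass] by blast
  show "W (\<lambda>y. \<mu> y + \<rho> y) (\<lambda>y. \<nu> y + \<rho> y) \<le> W \<mu> \<nu>"
  proof (rule wasserstein_greatest[OF T\<^sub>0])
    fix T assume T: "plan \<mu> \<nu> T"
    let ?T = "\<lambda>x y. T x y + (if x = y then \<rho> x else 0)"
    have P: "plan (\<lambda>y. \<mu> y + \<rho> y) (\<lambda>y. \<nu> y + \<rho> y) ?T"
      using T \<rho> finite_V unfolding transport_plan_def by (auto simp: sum.distrib)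
    have "cost ?T = cost T"
      unfolding cost_def by (auto simp: algebra_simps sum.distrib intro!: sum.neutral)
    then show "W (\<lambda>y. \<mu> y + \<rho> y) (\<lambda>y. \<nu> y + \<rho> y) \<le> cost T"
      using wasserstein_le_cost[OF P] by simp
  qed
  obtain T\<^sub>1 where T\<^sub>1: "plan (\<lambda>y. \<mu> y + \<rho> y) (\<lambda>y. \<nu> y + \<rho> y) T\<^sub>1"
    using transport_plan_exists[of "\<lambda>y. \<mu> y + \<rho> y" "\<lambda>y. \<nu> y + \<rho> y"] \<rho> \<mu> \<nu> mass
    by (auto simp: sum.distrib)
  show "W \<mu> \<nu> \<le> W (\<lambda>y. \<mu> y + \<rho> y) (\<lambda>y. \<nu> y + \<rho> y)"
  proof (rule wasserstein_greatest[OF T\<^sub>1])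
    fix T assume "plan (\<lambda>y. \<mu> y + \<rho> y) (\<lambda>y. \<nu> y + \<rho> y) T"
    then obtain S where "plan \<mu> \<nu> S" "cost S \<le> cost T"
      using transport_plan_cancel[OF \<rho> \<mu> \<nu>] by blast
    then show "W \<mu> \<nu> \<le> cost T"
      using wasserstein_le_cost order_trans by blast
  qed
qed

lemma cost_le_diam_mass: "plan \<mu> \<nu> T \<Longrightarrow> cost T \<le> real diam * sum \<mu> V"
proof -
  assume T: "plan \<mu> \<nu> T"
  have "cost T \<le> (\<Sum>x\<in>V. \<Sum>y\<in>V. real diam * T x y)"
    unfolding cost_def using T gdist_le_diam unfolding transport_plan_def
    by (intro sum_mono mult_right_mono) auto
  also have "\<dots> = real diam * sum \<mu> V"
    using T unfolding transport_plan_def by (simp add: sum_distrib_left[symmetric])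
  finally show ?thesis .
qed

lemma wasserstein_le_add_l1:
  assumes \<mu>: "\<forall>y\<in>V. 0 \<le> \<mu> y" and \<mu>': "\<forall>y\<in>V. 0 \<le> \<mu>' y" and \<nu>: "\<forall>y\<in>V. 0 \<le> \<nu> y"
    and mass: "sum \<mu> V = sum \<nu> V" "sum \<mu>' V = sum \<nu> V"
  shows "W \<mu>' \<nu> \<le> W \<mu> \<nu> + real diam * (\<Sum>x\<in>V. \<bar>\<mu> x - \<mu>' x\<bar>)"
proof -
  define p where "p x = max (\<mu> x - \<mu>' x) 0" for x
  define q where "q x = max (\<mu>' x - \<mu> x) 0" for x
  have p: "\<forall>y\<in>V. 0 \<le> p y" and q: "\<forall>y\<in>V. 0 \<le> q y" unfolding p_def q_def by auto
  have "sum p V - sum q V = sum \<mu> V - sum \<mu>' V"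
    unfolding sum_subtractf[symmetric] by (intro sum.cong) (auto simp: p_def q_def)
  then have pq_mass: "sum q V = sum p V" using mass by simp
  have "W \<mu>' \<nu> = W (\<lambda>y. \<mu>' y + p y) (\<lambda>y. \<nu> y + p y)"
    using wasserstein_add_common[OF p \<mu>' \<nu> mass(2)] by simp
  also have "(\<lambda>y. \<mu>' y + p y) = (\<lambda>y. \<mu> y + q y)"
    unfolding p_def q_def by auto
  finally have W_eq: "W \<mu>' \<nu> = W (\<lambda>y. \<mu> y + q y) (\<lambda>y. \<nu> y + p y)" .
  obtain P where P: "plan q p P" using transport_plan_exists[OF q p pq_mass] by blast
  have "cost P \<le> real diam * sum q V" using P by (rule cost_le_diam_mass)
  also have "\<dots> \<le> real diam * (\<Sum>x\<in>V. \<bar>\<mu> x - \<mu>' x\<bar>)"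
    unfolding q_def by (intro mult_left_mono sum_mono) auto
  finally have P_cost: "cost P \<le> real diam * (\<Sum>x\<in>V. \<bar>\<mu> x - \<mu>' x\<bar>)" .
  obtain T\<^sub>0 where T\<^sub>0: "plan \<mu> \<nu> T\<^sub>0" using transport_plan_exists[OF \<mu> \<nu> mass(1)] by blast
  have "W \<mu>' \<nu> - real diam * (\<Sum>x\<in>V. \<bar>\<mu> x - \<mu>' x\<bar>) \<le> W \<mu> \<nu>"
  proof (rule wasserstein_greatest[OF T\<^sub>0])
    fix T assume T: "plan \<mu> \<nu> T"
    have "plan (\<lambda>y. \<mu> y + q y) (\<lambda>y. \<nu> y + p y) (\<lambda>x y. T x y + P x y)"
      using T P unfolding transport_plan_def by (auto simp: sum.distrib)
    from wasserstein_le_cost[OF this] have "W \<mu>' \<nu> \<le> cost T + cost P"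
      unfolding W_eq by (simp add: cost_def algebra_simps sum.distrib)
    then show "W \<mu>' \<nu> - real diam * (\<Sum>x\<in>V. \<bar>\<mu> x - \<mu>' x\<bar>) \<le> cost T" using P_cost by simp
  qed
  then show ?thesis by simp
qed

definition prob_vector :: "('a \<Rightarrow> real) \<Rightarrow> bool" where
  "prob_vector f \<longleftrightarrow> (\<forall>x\<in>V. 0 \<le> f x) \<and> sum f V = 1"

definition l1_tendsto :: "(nat \<Rightarrow> 'a \<Rightarrow> real) \<Rightarrow> ('a \<Rightarrow> real) \<Rightarrow> bool" where
  "l1_tendsto F f \<longleftrightarrow> (\<lambda>k. \<Sum>x\<in>V. \<bar>F k x - f x\<bar>) \<longlonglongrightarrow> 0"

lemma abs_wasserstein_diff_le:
  assumes "prob_vector \<mu>" "prob_vector \<mu>'" "prob_vector \<nu>" "prob_vector \<nu>'"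
  shows "\<bar>W \<mu>' \<nu>' - W \<mu> \<nu>\<bar>
    \<le> real diam * ((\<Sum>x\<in>V. \<bar>\<mu> x - \<mu>' x\<bar>) + (\<Sum>x\<in>V. \<bar>\<nu> x - \<nu>' x\<bar>))"
proof -
  have l1_sym: "(\<Sum>x\<in>V. \<bar>f x - f' x\<bar>) = (\<Sum>x\<in>V. \<bar>f' x - f x\<bar>)" for f f' :: "'a \<Rightarrow> real"
    by (simp add: abs_minus_commute)
  have nonneg: "\<forall>x\<in>V. 0 \<le> \<mu> x" "\<forall>x\<in>V. 0 \<le> \<mu>' x" "\<forall>x\<in>V. 0 \<le> \<nu> x" "\<forall>x\<in>V. 0 \<le> \<nu>' x"
    and mass: "sum \<mu> V = 1" "sum \<mu>' V = 1" "sum \<nu> V = 1" "sum \<nu>' V = 1"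
    using assms unfolding prob_vector_def by auto
  have "W \<mu>' \<nu> \<le> W \<mu> \<nu> + real diam * (\<Sum>x\<in>V. \<bar>\<mu> x - \<mu>' x\<bar>)"
    using wasserstein_le_add_l1[OF nonneg(1,2,3)] mass by simp
  moreover have "W \<mu> \<nu> \<le> W \<mu>' \<nu> + real diam * (\<Sum>x\<in>V. \<bar>\<mu> x - \<mu>' x\<bar>)"
    using wasserstein_le_add_l1[OF nonneg(2,1,3)] mass l1_sym[of \<mu>] by simp
  moreover have "W \<nu>' \<mu>' \<le> W \<nu> \<mu>' + real diam * (\<Sum>x\<in>V. \<bar>\<nu> x - \<nu>' x\<bar>)"
    using wasserstein_le_add_l1[OF nonneg(3,4,2)] mass by simp
  moreover have "W \<nu> \<mu>' \<le> W \<nu>' \<mu>' + real diam * (\<Sum>x\<in>V. \<bar>\<nu> x - \<nu>' x\<bar>)"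
    using wasserstein_le_add_l1[OF nonneg(4,3,2)] mass l1_sym[of \<nu>] by simp
  ultimately show ?thesis
    using wasserstein_sym[of \<nu>' \<mu>'] wasserstein_sym[of \<nu> \<mu>']
    unfolding abs_le_iff distrib_left by linarith
qed

lemma wasserstein_tendsto:
  assumes "\<And>k. prob_vector (\<mu> k)" "\<And>k. prob_vector (\<nu> k)" "prob_vector \<mu>'" "prob_vector \<nu>'"
    and "l1_tendsto \<mu> \<mu>'" "l1_tendsto \<nu> \<nu>'"
  shows "(\<lambda>k. W (\<mu> k) (\<nu> k)) \<longlonglongrightarrow> W \<mu>' \<nu>'"
proof -
  define b where "b k = real diam * ((\<Sum>x\<in>V. \<bar>\<mu>' x - \<mu> k x\<bar>) + (\<Sum>x\<in>V. \<bar>\<nu>' x - \<nu> k x\<bar>))" for k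
  have bound: "\<forall>k. norm (W (\<mu> k) (\<nu> k) - W \<mu>' \<nu>') \<le> b k"
    unfolding b_def real_norm_def by (intro allI abs_wasserstein_diff_le) (simp_all add: assms)
  have "b \<longlonglongrightarrow> 0"
    using assms(5,6) unfolding b_def l1_tendsto_def
    by (simp add: abs_minus_commute tendsto_add_zero tendsto_mult_right_zero)
  with always_eventually[OF bound] have "(\<lambda>k. W (\<mu> k) (\<nu> k) - W \<mu>' \<nu>') \<longlonglongrightarrow> 0"
    by (rule Lim_null_comparison)
  then show ?thesis by (rule LIM_zero_cancel)
qed

lemma prob_vector_point_mass: "w \<in> V \<Longrightarrow> prob_vector (point_mass w)"
  unfolding prob_vector_def using finite_V by (simp add: sum_point_mass point_mass_def)

lemma l1_tendsto_even_odd: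
  assumes "l1_tendsto F f"
  shows "l1_tendsto (\<lambda>k. F (2 * k)) f" and "l1_tendsto (\<lambda>k. F (2 * k + 1)) f"
  using LIMSEQ_even_odd_subseqs assms unfolding l1_tendsto_def by blast+

lemma convergent_wasserstein:
  assumes "\<And>k. prob_vector (\<mu> k)" "\<And>k. prob_vector (\<nu> k)" "prob_vector \<mu>'" "prob_vector \<nu>'"
    and "l1_tendsto \<mu> \<mu>'" "l1_tendsto \<nu> \<nu>'"
  shows "convergent (\<lambda>k. W (\<mu> k) (\<nu> k))"
  using wasserstein_tendsto[OF assms] unfolding convergent_def by blast

lemma convergent_wasserstein_iff_even_odd:
  assumes "\<And>k. prob_vector (\<mu> k)" "\<And>k. prob_vector (\<nu> k)"
    and "prob_vector \<mu>\<^sub>0" "prob_vector \<mu>\<^sub>1" "prob_vector \<nu>\<^sub>0" "prob_vector \<nu>\<^sub>1"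
    and "l1_tendsto (\<lambda>k. \<mu> (2 * k)) \<mu>\<^sub>0" "l1_tendsto (\<lambda>k. \<mu> (2 * k + 1)) \<mu>\<^sub>1"
    and "l1_tendsto (\<lambda>k. \<nu> (2 * k)) \<nu>\<^sub>0" "l1_tendsto (\<lambda>k. \<nu> (2 * k + 1)) \<nu>\<^sub>1"
  shows "convergent (\<lambda>k. W (\<mu> k) (\<nu> k)) \<longleftrightarrow> W \<mu>\<^sub>0 \<nu>\<^sub>0 = W \<mu>\<^sub>1 \<nu>\<^sub>1"
  by (rule convergent_iff_even_odd_limits) (use assms in \<open>auto intro: wasserstein_tendsto\<close>)

end

section \<open>Stationary distribution\<close>

locale nontrivial_connected_graph = finite_connected_graph +
  assumes two_vertices: "2 \<le> card V"
begin

lemma exists_neighbour: assumes "x \<in> V" shows "\<exists>y. E x y"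
proof -
  obtain y where y: "y \<in> V" "y \<noteq> x"
    using two_vertices assms by (metis card_2_iff' card_le_Suc0_iff_eq finite_V not_less_eq_eq numeral_2_eq_2)
  then obtain n where "d x y = Suc n" using gdist_eq_0_imp_eq[OF assms] not0_implies_Suc by blast
  then have "(x, y) \<in> adj ^^ Suc n" using relpow_adj_gdist[OF assms y(1)] by simp
  then show ?thesis by (metis adj_iff relpow_Suc_D2)
qed

lemma deg_pos: "x \<in> V \<Longrightarrow> 0 < deg V E x"
  unfolding deg_def using exists_neighbour edge_in_V finite_V
  by (metis (mono_tags, lifting) card_gt_0_iff empty_iff finite_subset mem_Collect_eq subsetI)

lemma diam_pos: "0 < diam"
proof -
  obtain x y where "x \<in> V" "y \<in> V" "E x y" using V_nonempty exists_neighbour edge_in_V by blast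
  then show ?thesis using gdist_le_diam[of x y] gdist_eq_0_imp_eq edge_irrefl by fastforce
qed

lemma relpow_adj_pad:
  assumes "(x, y) \<in> adj ^^ n" "y \<in> V" "n \<le> m" "even (m - n)"
  shows "(x, y) \<in> adj ^^ m"
proof -
  obtain z where "E y z" using exists_neighbour[OF assms(2)] by blast
  moreover obtain j where "m = n + 2 * j" using assms(3,4) by (metis evenE le_add_diff_inverse)
  ultimately show ?thesis using relpow_adj_add_even[OF assms(1)] by blast
qed

definition deg_total :: real where
  "deg_total = (\<Sum>x\<in>V. real (deg V E x))"

definition stationary :: "'a \<Rightarrow> real" where
  "stationary x = real (deg V E x) / deg_total"

definition class_stationary :: "('a \<Rightarrow> bool) \<Rightarrow> bool \<Rightarrow> 'a \<Rightarrow> real" where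
  "class_stationary c b x = (if c x = b then 2 * stationary x else 0)"

lemma deg_total_pos: "0 < deg_total"
proof -
  obtain x where x: "x \<in> V" using V_nonempty by blast
  then have "0 < real (deg V E x)" using deg_pos by simp
  also have "\<dots> \<le> deg_total" unfolding deg_total_def using finite_V x by (intro member_le_sum) auto
  finally show ?thesis .
qed

lemma prob_vector_stationary: "prob_vector stationary"
  unfolding prob_vector_def stationary_def using deg_total_pos
  by (simp add: sum_divide_distrib[symmetric] deg_total_def)

lemma real_deg_eq_sum: "real (deg V E x) = (\<Sum>t\<in>V. if E x t then 1 else 0)"
  unfolding deg_def using finite_V by (simp add: sum.If_cases Int_def conj_commute)

lemma card_in_neighbours: "card {s \<in> V. E s t} = deg V E t"
  unfolding deg_def using edge_sym by metis

text \<open>Double counting the edges between the two colour classes.\<close>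

lemma sum_deg_colour_class:
  assumes c: "two_colouring c"
  shows "(\<Sum>x\<in>V. if c x = b then real (deg V E x) else 0) = deg_total / 2"
proof -
  have edge: "E x t \<Longrightarrow> c x = b \<longleftrightarrow> c t \<noteq> b" for x t
    using c edge_in_V unfolding two_colouring_def by blast
  have "(\<Sum>x\<in>V. if c x = b then real (deg V E x) else 0)
      = (\<Sum>x\<in>V. \<Sum>t\<in>V. if E x t \<and> c x = b then 1 else 0)"
    unfolding real_deg_eq_sum by (intro sum.cong) (auto intro!: sum.cong)
  also have "\<dots> = (\<Sum>t\<in>V. \<Sum>x\<in>V. if E t x \<and> c t \<noteq> b then 1 else 0)"
    by (subst sum.swap) (auto intro!: sum.cong dest: edge edge_sym)
  also have "\<dots> = (\<Sum>t\<in>V. if c t \<noteq> b then real (deg V E t) else 0)"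
    unfolding real_deg_eq_sum by (intro sum.cong) (auto intro!: sum.cong)
  finally have "(\<Sum>x\<in>V. if c x = b then real (deg V E x) else 0)
      = (\<Sum>x\<in>V. if c x \<noteq> b then real (deg V E x) else 0)" .
  moreover have "(\<Sum>x\<in>V. if c x = b then real (deg V E x) else 0)
      + (\<Sum>x\<in>V. if c x \<noteq> b then real (deg V E x) else 0) = deg_total"
    unfolding deg_total_def sum.distrib[symmetric] by (intro sum.cong) auto
  ultimately show ?thesis by simp
qed

lemma prob_vector_class_stationary:
  assumes "two_colouring c" shows "prob_vector (class_stationary c b)"
proof -
  have "sum (class_stationary c b) V
      = 2 / deg_total * (\<Sum>x\<in>V. if c x = b then real (deg V E x) else 0)"
    unfolding class_stationary_def stationary_def sum_distrib_left by (intro sum.cong) auto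
  then show ?thesis
    using sum_deg_colour_class[OF assms] deg_total_pos
    unfolding prob_vector_def class_stationary_def stationary_def by auto
qed

lemma wasserstein_class_stationary_point_mass:
  assumes c: "two_colouring c" and v: "v \<in> V"
  shows "W (class_stationary c b) (point_mass v) - W (class_stationary c (\<not> b)) (point_mass v)
    = (if b = c v then 1 else -1) * (2 / deg_total)
      * (\<Sum>w\<in>V. (-1) ^ d v w * real (d v w) * real (deg V E w))"
proof -
  have W: "W (class_stationary c b') (point_mass v) = (\<Sum>x\<in>V. class_stationary c b' x * real (d x v))"
    for b'
    using wasserstein_point_mass[OF _ _ v] prob_vector_class_stationary[OF c]
    unfolding prob_vector_def by blast
  have "class_stationary c b x * real (d x v) - class_stationary c (\<not> b) x * real (d x v)
      = (if b = c v then 1 else -1) * (2 / deg_total) * ((-1) ^ d v x * real (d v x) * real (deg V E x))"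
    if x: "x \<in> V" for x
    using colour_eq_iff_even_gdist[OF c v x] gdist_sym[OF x v]
    by (cases "even (d v x)") (auto simp: class_stationary_def stationary_def)
  then show ?thesis unfolding W by (simp add: sum_distrib_left flip: sum_subtractf cong: sum.cong)
qed

text \<open>Both sides equal \<open>W\<close> between the restrictions of the stationary distribution to the two
  colour classes, after cancelling the common mass.\<close>

lemma wasserstein_class_stationary_stationary:
  assumes c: "two_colouring c"
  shows "W (class_stationary c b) stationary = W (class_stationary c (\<not> b)) stationary"
proof -
  define h where "h b' x = class_stationary c b' x / 2" for b' x
  have h: "\<forall>x\<in>V. 0 \<le> h b' x" "sum (h b') V = 1 / 2" for b'
    using prob_vector_class_stationary[OF c, of b'] unfolding h_def prob_vector_def
    by (auto simp flip: sum_divide_distrib)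
  have "W (class_stationary c b') stationary = W (h b') (h (\<not> b'))" for b'
  proof -
    have "W (class_stationary c b') stationary = W (\<lambda>x. h b' x + h b' x) (\<lambda>x. h (\<not> b') x + h b' x)"
      by (rule wasserstein_cong) (auto simp: h_def class_stationary_def)
    also have "\<dots> = W (h b') (h (\<not> b'))"
      using h(1) h(2)[of b'] h(2)[of "\<not> b'"] by (intro wasserstein_add_common) auto
    finally show ?thesis .
  qed
  then show ?thesis using wasserstein_sym by simp
qed

end

section \<open>Lazy random walks\<close>

locale lazy_random_walk = nontrivial_connected_graph +
  fixes g :: real
  assumes laziness: "0 \<le> g" "g \<le> 1"
begin

abbreviation "P \<equiv> trans_prob V E g"

definition step :: "('a \<Rightarrow> real) \<Rightarrow> 'a \<Rightarrow> real" where
  "step f t = (\<Sum>s\<in>V. f s * P s t)"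

definition steps :: "('a \<Rightarrow> real) \<Rightarrow> nat \<Rightarrow> 'a \<Rightarrow> real" where
  "steps f k = (step ^^ k) f"

lemma steps_0 [simp]: "steps f 0 = f" and steps_Suc: "steps f (Suc k) = step (steps f k)"
  unfolding steps_def by simp_all

lemma steps_add: "steps f (a + b) = steps (steps f a) b"
  unfolding steps_def by (metis add.commute comp_apply funpow_add)

lemma walk_dist_eq_steps: "walk_dist V E g w k = steps (point_mass w) k"
  by (induction k) (auto simp: steps_Suc step_def point_mass_def)

lemma trans_prob_self: "s \<in> V \<Longrightarrow> P s s = g"
  using deg_pos[of s] unfolding trans_prob_def by simp

lemma trans_prob_edge: "E s t \<Longrightarrow> P s t = (1 - g) / real (deg V E s)"
  using deg_pos edge_in_V edge_irrefl unfolding trans_prob_def by (metis not_less0)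

lemma trans_prob_non_edge: "s \<in> V \<Longrightarrow> s \<noteq> t \<Longrightarrow> \<not> E s t \<Longrightarrow> P s t = 0"
  using deg_pos[of s] unfolding trans_prob_def by simp

lemma trans_prob_nonneg: "0 \<le> P s t"
  using laziness unfolding trans_prob_def by simp

lemma sum_trans_prob: assumes "s \<in> V" shows "(\<Sum>t\<in>V. P s t) = 1"
proof -
  have "P s t = g * point_mass s t + (if E s t then (1 - g) / real (deg V E s) else 0)" for t
    using trans_prob_self trans_prob_edge trans_prob_non_edge assms edge_irrefl
    by (auto simp: point_mass_def)
  then have "(\<Sum>t\<in>V. P s t) = g + real (deg V E s) * ((1 - g) / real (deg V E s))"
    using assms finite_V
    by (simp add: sum.distrib sum_distrib_left[symmetric] sum_point_mass sum.If_cases deg_def Int_def)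
  also have "\<dots> = 1" using deg_pos[OF assms] by simp
  finally show ?thesis .
qed

lemma step_cong: "(\<And>x. x \<in> V \<Longrightarrow> f x = f' x) \<Longrightarrow> step f = step f'"
  unfolding step_def by (auto intro!: ext sum.cong)

lemma sum_step: "(\<Sum>t\<in>V. step f t) = sum f V"
proof -
  have "(\<Sum>t\<in>V. step f t) = (\<Sum>s\<in>V. f s * (\<Sum>t\<in>V. P s t))"
    unfolding step_def by (subst sum.swap) (simp add: sum_distrib_left)
  then show ?thesis using sum_trans_prob by simp
qed

lemma sum_steps: "(\<Sum>t\<in>V. steps f k t) = sum f V"
  by (induction k) (simp_all add: steps_Suc sum_step)

lemma sum_abs_step_le: "(\<Sum>t\<in>V. \<bar>step f t\<bar>) \<le> (\<Sum>s\<in>V. \<bar>f s\<bar>)"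
proof -
  have "(\<Sum>t\<in>V. \<bar>step f t\<bar>) \<le> (\<Sum>t\<in>V. \<Sum>s\<in>V. \<bar>f s\<bar> * P s t)"
    unfolding step_def by (intro sum_mono order.trans[OF sum_abs]) (simp add: abs_mult trans_prob_nonneg)
  also have "\<dots> = (\<Sum>s\<in>V. \<bar>f s\<bar> * (\<Sum>t\<in>V. P s t))"
    by (subst sum.swap) (simp add: sum_distrib_left)
  finally show ?thesis using sum_trans_prob by simp
qed

lemma sum_abs_steps_antimono: "m \<le> n \<Longrightarrow> (\<Sum>t\<in>V. \<bar>steps f n t\<bar>) \<le> (\<Sum>t\<in>V. \<bar>steps f m t\<bar>)"
proof (induction n rule: dec_induct)
  case (step n)
  then show ?case using sum_abs_step_le[of "steps f n"] by (simp add: steps_Suc)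
qed simp

lemma steps_diff: "steps (\<lambda>x. f x - f' x) k = (\<lambda>t. steps f k t - steps f' k t)"
  by (induction k) (auto simp: steps_Suc step_def algebra_simps sum_subtractf)

lemma steps_nonneg: "\<forall>x\<in>V. 0 \<le> f x \<Longrightarrow> t \<in> V \<Longrightarrow> 0 \<le> steps f k t"
  by (induction k arbitrary: t) (auto simp: steps_Suc step_def trans_prob_nonneg intro!: sum_nonneg)

lemma steps_point_mass_nonneg: "t \<in> V \<Longrightarrow> 0 \<le> steps (point_mass w) k t"
  by (rule steps_nonneg) (simp_all add: point_mass_def)

lemma step_ge: "\<forall>x\<in>V. 0 \<le> f x \<Longrightarrow> s \<in> V \<Longrightarrow> f s * P s t \<le> step f t"
  unfolding step_def using finite_V by (intro member_le_sum) (auto simp: trans_prob_nonneg)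

lemma steps_eq_sum_point_mass:
  "t \<in> V \<Longrightarrow> steps f k t = (\<Sum>x\<in>V. f x * steps (point_mass x) k t)"
proof (induction k arbitrary: t)
  case 0
  then show ?case using sum_point_mass_mult(2)[OF finite_V 0] by (simp add: point_mass_def eq_commute)
next
  case (Suc k)
  have "steps f (Suc k) t = (\<Sum>s\<in>V. \<Sum>x\<in>V. f x * (steps (point_mass x) k s * P s t))"
    unfolding steps_Suc step_def using Suc.IH by (simp add: sum_distrib_right mult.assoc)
  also have "\<dots> = (\<Sum>x\<in>V. f x * steps (point_mass x) (Suc k) t)"
    unfolding steps_Suc step_def by (subst sum.swap) (simp add: sum_distrib_left)
  finally show ?case .
qed

lemma steps_pos_if_walk:
  assumes "g < 1" "x \<in> V"
  shows "(x, y) \<in> adj ^^ k \<Longrightarrow> 0 < steps (point_mass x) k y"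
proof (induction k arbitrary: y)
  case (Suc k)
  then obtain z where z: "(x, z) \<in> adj ^^ k" "E z y" by (auto elim: relpow_Suc_E)
  have z_V: "z \<in> V" using z(2) edge_in_V by auto
  have "0 < steps (point_mass x) k z * P z y"
    using Suc.IH[OF z(1)] trans_prob_edge[OF z(2)] deg_pos[OF z_V] assms(1) by simp
  also have "\<dots> \<le> steps (point_mass x) (Suc k) y"
    unfolding steps_Suc using z_V steps_point_mass_nonneg by (intro step_ge) auto
  finally show ?case .
qed (simp add: point_mass_def)

lemma steps_pos_mono:
  assumes "0 < g" "\<forall>x\<in>V. 0 \<le> f x" "y \<in> V" "0 < steps f k y" "k \<le> m"
  shows "0 < steps f m y"
  using assms(5)
proof (induction m rule: dec_induct)
  case (step m)
  have "0 < steps f m y * P y y" using step.IH assms trans_prob_self by simp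
  also have "\<dots> \<le> steps f (Suc m) y"
    unfolding steps_Suc using assms(2,3) steps_nonneg by (intro step_ge) auto
  finally show ?case .
qed (use assms in simp)

lemma step_stationary: assumes t: "t \<in> V" shows "step stationary t = stationary t"
proof -
  have "stationary s * P s t = g * stationary t * point_mass t s + (if E s t then (1 - g) / deg_total else 0)"
    if s: "s \<in> V" for s
    using trans_prob_self[OF s] trans_prob_edge[of s t] trans_prob_non_edge[OF s] deg_pos[OF s]
      deg_total_pos edge_irrefl
    by (auto simp: stationary_def point_mass_def)
  then have "step stationary t = (\<Sum>s\<in>V. g * stationary t * point_mass t s)
      + (\<Sum>s\<in>V. if E s t then (1 - g) / deg_total else 0)"
    unfolding step_def by (simp add: sum.distrib)
  also have "\<dots> = g * stationary t + real (deg V E t) * (1 - g) / deg_total"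
    using finite_V t card_in_neighbours[of t]
    by (simp add: sum_point_mass sum.If_cases Int_def conj_commute flip: sum_distrib_left)
  also have "\<dots> = stationary t" unfolding stationary_def using deg_total_pos by (simp add: field_simps)
  finally show ?thesis .
qed

lemma steps_stationary: "t \<in> V \<Longrightarrow> steps stationary k t = stationary t"
proof (induction k arbitrary: t)
  case (Suc k)
  then have "step (steps stationary k) = step stationary" by (intro step_cong) simp
  then show ?case using step_stationary[OF Suc.prems] by (simp add: steps_Suc)
qed simp

text \<open>Doeblin's argument: if every \<open>N\<close>-step distribution from \<open>A\<close> puts mass at least \<open>\<delta>\<close> on
  every point of \<open>A\<close>, then \<open>N\<close> steps contract signed measures of total mass zero supported
  on \<open>A\<close> by the factor \<open>1 - \<delta> |A|\<close> in \<open>\<ell>\<^sup>1\<close>.\<close>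

context
  fixes A :: "'a set" and N :: nat and \<delta> :: real
  assumes A: "A \<subseteq> V" "A \<noteq> {}" and \<delta>: "0 < \<delta>"
    and minorisation: "\<forall>x\<in>A. \<forall>y\<in>A. \<delta> \<le> steps (point_mass x) N y"
begin

lemma doeblin_factor: "0 \<le> 1 - \<delta> * card A" "1 - \<delta> * card A < 1"
proof -
  obtain x where x: "x \<in> A" using A by blast
  have "\<delta> * card A = (\<Sum>y\<in>A. \<delta>)" by simp
  also have "\<dots> \<le> (\<Sum>y\<in>A. steps (point_mass x) N y)" using minorisation x by (intro sum_mono) auto
  also have "\<dots> \<le> (\<Sum>y\<in>V. steps (point_mass x) N y)"
    using A finite_V steps_point_mass_nonneg by (intro sum_mono2) auto
  also have "\<dots> = 1" using x A(1) finite_V by (auto simp: sum_steps sum_point_mass)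
  finally show "0 \<le> 1 - \<delta> * card A" by simp
  show "1 - \<delta> * card A < 1" using \<delta> A finite_V by (simp add: card_gt_0_iff finite_subset)
qed

lemma doeblin_contraction:
  assumes supp: "\<forall>x\<in>V - A. h x = 0" and mass: "sum h V = 0"
  shows "(\<Sum>y\<in>V. \<bar>steps h N y\<bar>) \<le> (1 - \<delta> * card A) * (\<Sum>x\<in>V. \<bar>h x\<bar>)"
proof -
  define K where "K x y = steps (point_mass x) N y - (if y \<in> A then \<delta> else 0)" for x y
  have K_nonneg: "x \<in> A \<Longrightarrow> y \<in> V \<Longrightarrow> 0 \<le> K x y" for x y
    using minorisation steps_point_mass_nonneg unfolding K_def by auto
  have "(\<Sum>y\<in>V. if y \<in> A then \<delta> else 0) = \<delta> * card A"
    using A(1) finite_V by (simp add: sum.If_cases Int_absorb1)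
  then have sum_K: "(\<Sum>y\<in>V. K x y) = 1 - \<delta> * card A" if "x \<in> A" for x
    using that A(1) finite_V unfolding K_def by (auto simp: sum_subtractf sum_steps sum_point_mass)
  have on_A: "(\<Sum>x\<in>V. f x) = (\<Sum>x\<in>A. f x)" if "\<forall>x\<in>V - A. f x = 0" for f :: "'a \<Rightarrow> real"
    using that A finite_V by (intro sum.mono_neutral_right) auto
  have "\<bar>steps h N y\<bar> \<le> (\<Sum>x\<in>A. \<bar>h x\<bar> * K x y)" if y: "y \<in> V" for y
  proof -
    have "steps h N y = (\<Sum>x\<in>A. h x * steps (point_mass x) N y)"
      using steps_eq_sum_point_mass[OF y, of h N] on_A[of "\<lambda>x. h x * steps (point_mass x) N y"] supp
      by simp
    also have "\<dots> = (\<Sum>x\<in>A. h x * K x y)"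
      using mass on_A[of h] supp unfolding K_def
      by (simp add: right_diff_distrib sum_subtractf flip: sum_distrib_right)
    finally show ?thesis
      using K_nonneg y by (auto simp: abs_mult intro: order.trans[OF sum_abs] sum_mono)
  qed
  then have "(\<Sum>y\<in>V. \<bar>steps h N y\<bar>) \<le> (\<Sum>x\<in>A. \<bar>h x\<bar> * (\<Sum>y\<in>V. K x y))"
    by (subst sum_distrib_left, subst sum.swap) (rule sum_mono)
  also have "\<dots> = (1 - \<delta> * card A) * (\<Sum>x\<in>V. \<bar>h x\<bar>)"
    using on_A[of "\<lambda>x. \<bar>h x\<bar>"] supp sum_K by (simp add: sum_distrib_right mult.commute)
  finally show ?thesis .
qed

context
  assumes N: "0 < N"
    and closed: "\<And>h. \<forall>x\<in>V - A. h x = 0 \<Longrightarrow> \<forall>x\<in>V - A. steps h N x = 0"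
begin

lemma doeblin_iterate:
  assumes "\<forall>x\<in>V - A. h x = 0" "sum h V = 0"
  shows "(\<Sum>y\<in>V. \<bar>steps h (j * N) y\<bar>) \<le> (1 - \<delta> * card A) ^ j * (\<Sum>x\<in>V. \<bar>h x\<bar>)"
    and "\<forall>x\<in>V - A. steps h (j * N) x = 0"
proof (induction j)
  case (Suc j)
  have split: "steps h (Suc j * N) = steps (steps h (j * N)) N"
    using steps_add[of h "j * N" N] by (simp add: add.commute)
  show "\<forall>x\<in>V - A. steps h (Suc j * N) x = 0" unfolding split using Suc closed by blast
  have "(\<Sum>y\<in>V. \<bar>steps h (Suc j * N) y\<bar>) \<le> (1 - \<delta> * card A) * (\<Sum>x\<in>V. \<bar>steps h (j * N) x\<bar>)"
    unfolding split using Suc assms(2) by (intro doeblin_contraction) (auto simp: sum_steps)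
  also have "\<dots> \<le> (1 - \<delta> * card A) * ((1 - \<delta> * card A) ^ j * (\<Sum>x\<in>V. \<bar>h x\<bar>))"
    using Suc doeblin_factor by (intro mult_left_mono) auto
  finally show "(\<Sum>y\<in>V. \<bar>steps h (Suc j * N) y\<bar>) \<le> (1 - \<delta> * card A) ^ Suc j * (\<Sum>x\<in>V. \<bar>h x\<bar>)"
    by simp
qed (use assms in simp_all)

lemma doeblin_tendsto_0:
  assumes "\<forall>x\<in>V - A. h x = 0" "sum h V = 0"
  shows "(\<lambda>k. \<Sum>y\<in>V. \<bar>steps h k y\<bar>) \<longlonglongrightarrow> 0"
proof -
  have bound: "(\<Sum>y\<in>V. \<bar>steps h k y\<bar>) \<le> (1 - \<delta> * card A) ^ (k div N) * (\<Sum>x\<in>V. \<bar>h x\<bar>)" for k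
    using sum_abs_steps_antimono[of "k div N * N" k h] doeblin_iterate(1)[OF assms, of "k div N"]
    by (simp add: div_times_less_eq_dividend)
  have lim: "(\<lambda>k. (1 - \<delta> * card A) ^ (k div N) * (\<Sum>x\<in>V. \<bar>h x\<bar>)) \<longlonglongrightarrow> 0"
    using doeblin_factor
    by (intro tendsto_mult_left_zero filterlim_compose[OF LIMSEQ_power_zero
          filterlim_at_top_div_const_nat[OF N]]) auto
  show ?thesis
    by (rule tendsto_sandwich[OF _ _ tendsto_const lim]) (auto intro!: always_eventually sum_nonneg bound)
qed

end

end

lemma prob_vector_walk_dist: "w \<in> V \<Longrightarrow> prob_vector (walk_dist V E g w k)"
  unfolding prob_vector_def walk_dist_eq_steps
  using steps_point_mass_nonneg finite_V by (simp add: sum_steps sum_point_mass)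

lemma walk_tendsto_stationary_if_positive:
  assumes N: "0 < N" and pos: "\<forall>x\<in>V. \<forall>y\<in>V. 0 < steps (point_mass x) N y" and w: "w \<in> V"
  shows "l1_tendsto (walk_dist V E g w) stationary"
proof -
  obtain \<delta> where \<delta>: "0 < \<delta>" "\<forall>(x, y)\<in>V \<times> V. \<delta> \<le> steps (point_mass x) N y"
    using finite_pos_lower_bound[of "V \<times> V" "\<lambda>(x, y). steps (point_mass x) N y"] pos finite_V
    by auto
  have "sum (\<lambda>x. point_mass w x - stationary x) V = 0"
    using prob_vector_stationary w finite_V
    by (simp add: sum_subtractf sum_point_mass prob_vector_def)
  then have "(\<lambda>k. \<Sum>y\<in>V. \<bar>steps (\<lambda>x. point_mass w x - stationary x) k y\<bar>) \<longlonglongrightarrow> 0"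
    using \<delta> V_nonempty N by (intro doeblin_tendsto_0[of V \<delta> N]) auto
  then show ?thesis
    unfolding l1_tendsto_def walk_dist_eq_steps steps_diff
    by (simp add: steps_stationary cong: sum.cong)
qed

lemma walk_tendsto_stationary_lazy:
  assumes "0 < g" "g < 1" "w \<in> V"
  shows "l1_tendsto (walk_dist V E g w) stationary"
proof (rule walk_tendsto_stationary_if_positive[OF _ _ assms(3)])
  show "\<forall>x\<in>V. \<forall>y\<in>V. 0 < steps (point_mass x) (Suc diam) y"
  proof (intro ballI)
    fix x y assume xy: "x \<in> V" "y \<in> V"
    have "0 < steps (point_mass x) (d x y) y"
      using steps_pos_if_walk[OF assms(2) xy(1) relpow_adj_gdist[OF xy]] .
    then show "0 < steps (point_mass x) (Suc diam) y"
      using steps_pos_mono[OF assms(1) _ xy(2)] gdist_le_diam[OF xy] by (simp add: point_mass_def)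
  qed
qed simp

text \<open>On a non-bipartite graph, combining walks through \<open>w\<close> with an odd closed walk at \<open>w\<close>
  connects any two vertices by walks of every length \<open>N = 2 diam + L\<close>.\<close>

lemma walk_tendsto_stationary_non_bipartite:
  assumes "g < 1" "\<not> bipartite V E" "w \<in> V"
  shows "l1_tendsto (walk_dist V E g w) stationary"
proof -
  obtain L where L: "odd L" "(w, w) \<in> adj ^^ L"
    using odd_closed_walk_if_not_bipartite[OF assms(2,3)] by blast
  show ?thesis
  proof (rule walk_tendsto_stationary_if_positive[OF _ _ assms(3)])
    show "0 < 2 * diam + L" using L(1) by presburger
    show "\<forall>x\<in>V. \<forall>y\<in>V. 0 < steps (point_mass x) (2 * diam + L) y"
    proof (intro ballI)
      fix x y assume xy: "x \<in> V" "y \<in> V"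
      define a where "a = d x w + d w y"
      have short: "(x, y) \<in> adj ^^ a" unfolding a_def
        using relpow_adj_gdist[OF xy(1) assms(3)] relpow_adj_gdist[OF assms(3) xy(2)]
        by (rule relpow_trans)
      have long: "(x, y) \<in> adj ^^ (a + L)" unfolding a_def
        using relpow_trans[OF relpow_trans[OF relpow_adj_gdist[OF xy(1) assms(3)] L(2)]
            relpow_adj_gdist[OF assms(3) xy(2)]] by (simp add: algebra_simps)
      have "a \<le> 2 * diam" unfolding a_def
        using gdist_le_diam[OF xy(1) assms(3)] gdist_le_diam[OF assms(3) xy(2)] by simp
      then have "(x, y) \<in> adj ^^ (2 * diam + L)"
        using short long L(1) xy(2) by (cases "odd a") (auto intro: relpow_adj_pad)
      then show "0 < steps (point_mass x) (2 * diam + L) y"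
        by (rule steps_pos_if_walk[OF assms(1) xy(1)])
    qed
  qed
qed

lemma walk_dist_laziness_1:
  assumes "g = 1" "t \<in> V" shows "walk_dist V E g w k t = point_mass w t"
proof -
  have P: "P s t = point_mass t s" if "s \<in> V" for s t
    using assms(1) that trans_prob_self trans_prob_non_edge trans_prob_edge
    by (cases "s = t"; cases "E s t") (auto simp: point_mass_def)
  show ?thesis using assms(2)
  proof (induction k arbitrary: t)
    case (Suc k)
    then show ?case using sum_point_mass_mult(2)[OF finite_V Suc.prems] by (simp add: P cong: sum.cong)
  qed (simp add: point_mass_def)
qed

context
  fixes c :: "'a \<Rightarrow> bool"
  assumes non_lazy: "g = 0" and c: "two_colouring c"
begin

lemma trans_prob_same_colour:
  assumes "s \<in> V" "t \<in> V" "c s = c t" shows "P s t = 0"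
proof (cases "s = t")
  case False
  have "\<not> E s t" using c assms unfolding two_colouring_def by blast
  then show ?thesis using trans_prob_non_edge[OF assms(1) False] by simp
qed (use trans_prob_self non_lazy assms in simp)

lemma step_swaps_colour_support:
  assumes "\<forall>x\<in>V. c x \<noteq> b \<longrightarrow> h x = 0"
  shows "\<forall>t\<in>V. c t = b \<longrightarrow> step h t = 0"
proof -
  have "h s * P s t = 0" if "s \<in> V" "t \<in> V" "c t = b" for s t
    using assms trans_prob_same_colour[of s t] that by (cases "c s = b") auto
  then show ?thesis unfolding step_def by (auto intro!: sum.neutral)
qed

lemma steps_even_keep_colour_support:
  assumes "\<forall>x\<in>V. c x \<noteq> b \<longrightarrow> h x = 0"
  shows "\<forall>t\<in>V. c t \<noteq> b \<longrightarrow> steps h (2 * j) t = 0"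
proof (induction j)
  case (Suc j)
  then have "\<forall>t\<in>V. c t \<noteq> (\<not> b) \<longrightarrow> step (steps h (2 * j)) t = 0"
    using step_swaps_colour_support by auto
  then show ?case using step_swaps_colour_support[of "\<not> b"] by (simp add: steps_Suc)
qed (use assms in simp)

lemma step_class_stationary:
  assumes t: "t \<in> V"
  shows "step (class_stationary c b) t = class_stationary c (\<not> b) t"
proof -
  have "class_stationary c b s * P s t = (if E s t \<and> c s = b then 2 / deg_total else 0)"
    if s: "s \<in> V" for s
  proof (cases "E s t \<and> c s = b")
    case True
    then show ?thesis using trans_prob_edge deg_pos[OF s] non_lazy
      by (simp add: class_stationary_def stationary_def)
  next
    case False
    then show ?thesis using trans_prob_same_colour[OF s t] trans_prob_non_edge[OF s]
      unfolding class_stationary_def by (cases "c s = b"; cases "s = t") auto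
  qed
  then have "step (class_stationary c b) t = 2 / deg_total * card {s \<in> V. E s t \<and> c s = b}"
    unfolding step_def using finite_V by (simp add: sum.If_cases Int_def conj_commute)
  also have "{s \<in> V. E s t \<and> c s = b} = (if c t = b then {} else {s \<in> V. E s t})"
    using c t unfolding two_colouring_def by auto
  finally show ?thesis
    using card_in_neighbours[of t] unfolding class_stationary_def stationary_def by auto
qed

lemma steps_class_stationary:
  "t \<in> V \<Longrightarrow> steps (class_stationary c b) k t = class_stationary c (if even k then b else \<not> b) t"
proof (induction k arbitrary: t)
  case (Suc k)
  then have "step (steps (class_stationary c b) k) = step (class_stationary c (if even k then b else \<not> b))"
    by (intro step_cong) simp
  then show ?case using step_class_stationary[OF Suc.prems] by (simp add: steps_Suc)
qed simp

lemma steps_pos_same_colour: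
  assumes "x \<in> V" "y \<in> V" "c x = c y"
  shows "0 < steps (point_mass x) (2 * diam) y"
proof -
  have "even (d x y)" "d x y \<le> 2 * diam"
    using colour_eq_iff_even_gdist[OF c] gdist_le_diam assms by fastforce+
  then have "(x, y) \<in> adj ^^ (2 * diam)"
    using relpow_adj_pad[OF relpow_adj_gdist[OF assms(1,2)] assms(2)] by simp
  then show ?thesis using steps_pos_if_walk non_lazy assms by simp
qed

text \<open>Restricted to the colour class \<open>A\<close> of \<open>w\<close>, the walk observed at even times satisfies
  Doeblin's condition, so it converges there to twice the stationary distribution.\<close>

lemma walk_tendsto_class_stationary_even_odd:
  assumes w: "w \<in> V"
  shows "l1_tendsto (\<lambda>k. walk_dist V E g w (2 * k)) (class_stationary c (c w))"
    and "l1_tendsto (\<lambda>k. walk_dist V E g w (2 * k + 1)) (class_stationary c (\<not> c w))"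
proof -
  define A where "A = {x \<in> V. c x = c w}"
  define N where "N = 2 * diam"
  have A: "A \<subseteq> V" "A \<noteq> {}" using w unfolding A_def by auto
  obtain \<delta> where \<delta>: "0 < \<delta>" "\<forall>(x, y)\<in>A \<times> A. \<delta> \<le> steps (point_mass x) N y"
    using finite_pos_lower_bound[of "A \<times> A" "\<lambda>(x, y). steps (point_mass x) N y"]
      finite_subset[OF A(1) finite_V] steps_pos_same_colour unfolding A_def N_def by auto
  have closed: "\<forall>x\<in>V - A. steps h N x = 0" if "\<forall>x\<in>V - A. h x = 0" for h
    using that steps_even_keep_colour_support[of "c w" h diam] unfolding A_def N_def by auto
  define h where "h x = point_mass w x - class_stationary c (c w) x" for x
  have "\<forall>x\<in>V - A. h x = 0" unfolding h_def A_def point_mass_def class_stationary_def by auto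
  moreover have "sum h V = 0"
    using prob_vector_class_stationary[OF c] w finite_V unfolding h_def prob_vector_def
    by (simp add: sum_subtractf sum_point_mass)
  moreover have "0 < N" unfolding N_def using diam_pos by simp
  ultimately have "(\<lambda>k. \<Sum>y\<in>V. \<bar>steps h k y\<bar>) \<longlonglongrightarrow> 0"
    using A \<delta> closed by (intro doeblin_tendsto_0[of A \<delta> N]) auto
  then have even: "(\<lambda>k. \<Sum>y\<in>V. \<bar>steps h (2 * k) y\<bar>) \<longlonglongrightarrow> 0"
    and odd: "(\<lambda>k. \<Sum>y\<in>V. \<bar>steps h (2 * k + 1) y\<bar>) \<longlonglongrightarrow> 0"
    by (fact LIMSEQ_even_odd_subseqs)+
  show "l1_tendsto (\<lambda>k. walk_dist V E g w (2 * k)) (class_stationary c (c w))"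
    using even unfolding l1_tendsto_def walk_dist_eq_steps h_def steps_diff
    by (simp add: steps_class_stationary cong: sum.cong)
  show "l1_tendsto (\<lambda>k. walk_dist V E g w (2 * k + 1)) (class_stationary c (\<not> c w))"
    using odd unfolding l1_tendsto_def walk_dist_eq_steps h_def steps_diff
    by (simp add: steps_class_stationary cong: sum.cong)
qed

end

lemma walk_converges:
  assumes "\<not> (g = 0 \<and> bipartite V E)" "w \<in> V"
  obtains \<mu> where "prob_vector \<mu>" "l1_tendsto (walk_dist V E g w) \<mu>"
proof (cases "g = 1")
  case True
  have "l1_tendsto (walk_dist V E g w) (point_mass w)"
    unfolding l1_tendsto_def by (simp add: walk_dist_laziness_1[OF True] cong: sum.cong)
  then show ?thesis using that prob_vector_point_mass[OF assms(2)] by blast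
next
  case False
  then have "l1_tendsto (walk_dist V E g w) stationary"
    using assms laziness walk_tendsto_stationary_lazy walk_tendsto_stationary_non_bipartite
    by force
  then show ?thesis using that prob_vector_stationary by blast
qed

end

section \<open>Convergence of the Wasserstein distance\<close>

context nontrivial_connected_graph
begin

context
  fixes u v :: 'a and \<alpha> \<beta> :: real
  assumes u: "u \<in> V" and v: "v \<in> V" and laziness: "0 \<le> \<alpha>" "\<alpha> \<le> \<beta>" "\<beta> \<le> 1"
begin

interpretation A: lazy_random_walk V E \<alpha>
  using laziness by unfold_locales auto

interpretation B: lazy_random_walk V E \<beta>
  using laziness by unfold_locales auto

lemma convergent_wasserstein_walks_aperiodic:
  assumes "\<not> (\<alpha> = 0 \<and> bipartite V E)"
  shows "convergent (\<lambda>k. W (walk_dist V E \<alpha> u k) (walk_dist V E \<beta> v k))"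
proof -
  obtain \<mu> where "prob_vector \<mu>" "l1_tendsto (walk_dist V E \<alpha> u) \<mu>"
    using A.walk_converges[OF assms u] .
  moreover obtain \<nu> where "prob_vector \<nu>" "l1_tendsto (walk_dist V E \<beta> v) \<nu>"
    using B.walk_converges[OF _ v] assms laziness by force
  ultimately show ?thesis
    using A.prob_vector_walk_dist[OF u] B.prob_vector_walk_dist[OF v]
    by (intro convergent_wasserstein)
qed

context
  fixes c assumes non_lazy: "\<alpha> = 0" and c: "two_colouring c"
begin

lemma first_walk_tendsto_even_odd:
  "l1_tendsto (\<lambda>k. walk_dist V E \<alpha> u (2 * k)) (class_stationary c (c u))"
  "l1_tendsto (\<lambda>k. walk_dist V E \<alpha> u (2 * k + 1)) (class_stationary c (\<not> c u))"
  using A.walk_tendsto_class_stationary_even_odd[OF non_lazy c u] by auto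

lemma convergent_wasserstein_walks_iff_limits:
  assumes "prob_vector \<nu>\<^sub>0" "prob_vector \<nu>\<^sub>1"
    and "l1_tendsto (\<lambda>k. walk_dist V E \<beta> v (2 * k)) \<nu>\<^sub>0"
    and "l1_tendsto (\<lambda>k. walk_dist V E \<beta> v (2 * k + 1)) \<nu>\<^sub>1"
  shows "convergent (\<lambda>k. W (walk_dist V E \<alpha> u k) (walk_dist V E \<beta> v k))
    \<longleftrightarrow> W (class_stationary c (c u)) \<nu>\<^sub>0 = W (class_stationary c (\<not> c u)) \<nu>\<^sub>1"
  by (rule convergent_wasserstein_iff_even_odd[OF A.prob_vector_walk_dist[OF u]
        B.prob_vector_walk_dist[OF v] prob_vector_class_stationary[OF c]
        prob_vector_class_stationary[OF c] assms(1,2) first_walk_tendsto_even_odd assms(3,4)])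

lemma convergent_wasserstein_walks_both_non_lazy:
  assumes "\<beta> = 0"
  shows "convergent (\<lambda>k. W (walk_dist V E \<alpha> u k) (walk_dist V E \<beta> v k))"
proof -
  have "W (class_stationary c (c u)) (class_stationary c (c v))
      = W (class_stationary c (\<not> c u)) (class_stationary c (\<not> c v))"
    using wasserstein_self prob_vector_class_stationary[OF c] wasserstein_sym
    by (cases "c u = c v") (auto simp: prob_vector_def)
  then show ?thesis
    using convergent_wasserstein_walks_iff_limits[OF prob_vector_class_stationary[OF c]
        prob_vector_class_stationary[OF c] B.walk_tendsto_class_stationary_even_odd[OF assms c v]]
    by simp
qed

lemma convergent_wasserstein_walks_lazy_second:
  assumes "0 < \<beta>" "\<beta> < 1"
  shows "convergent (\<lambda>k. W (walk_dist V E \<alpha> u k) (walk_dist V E \<beta> v k))"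
  using convergent_wasserstein_walks_iff_limits[OF prob_vector_stationary prob_vector_stationary
      l1_tendsto_even_odd[OF B.walk_tendsto_stationary_lazy[OF assms v]]]
    wasserstein_class_stationary_stationary[OF c]
  by simp

lemma convergent_wasserstein_walks_stuck_second_iff:
  assumes "\<beta> = 1"
  shows "convergent (\<lambda>k. W (walk_dist V E \<alpha> u k) (walk_dist V E \<beta> v k))
    \<longleftrightarrow> (\<Sum>w\<in>V. (-1) ^ d v w * real (d v w) * real (deg V E w)) = 0"
proof -
  have "l1_tendsto (walk_dist V E \<beta> v) (point_mass v)"
    unfolding l1_tendsto_def by (simp add: B.walk_dist_laziness_1[OF assms] cong: sum.cong)
  then show ?thesis
    using convergent_wasserstein_walks_iff_limits[OF prob_vector_point_mass[OF v]
        prob_vector_point_mass[OF v] l1_tendsto_even_odd]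
      wasserstein_class_stationary_point_mass[OF c v, of "c u"] deg_total_pos
    by (auto split: if_splits)
qed

end

end

end

theorem theorem3p10:
  fixes V :: "'a set" and E :: "'a \<Rightarrow> 'a \<Rightarrow> bool" and u v :: 'a and \<alpha> \<beta> :: real
  assumes "connected_graph V E"
    and "u \<in> V" and "v \<in> V"
    and "0 \<le> \<alpha>" and "\<alpha> \<le> \<beta>" and "\<beta> \<le> 1"
  shows "\<not> convergent (\<lambda>k. wasserstein V E (walk_dist V E \<alpha> u k) (walk_dist V E \<beta> v k))
    \<longleftrightarrow> bipartite V E \<and> \<alpha> = 0 \<and> \<beta> = 1 \<and>
        (\<Sum>w\<in>V. (-1) ^ gdist E v w * real (gdist E v w) * real (deg V E w)) \<noteq> 0"
proof -
  interpret finite_connected_graph V E by (rule finite_connected_graph.intro) fact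
  show ?thesis
  proof (cases "2 \<le> card V")
    case False
    then have "\<forall>x\<in>V. \<forall>y\<in>V. x = y" using card_le_Suc0_iff_eq[OF finite_V] by simp
    then have V: "V = {v}" and "u = v" using assms(2,3) by auto
    then show ?thesis using walk_dist_single_vertex[OF V] by (simp add: convergent_const)
  next
    case True
    interpret nontrivial_connected_graph V E by unfold_locales fact
    consider (aperiodic) "\<not> (\<alpha> = 0 \<and> bipartite V E)"
      | (both_non_lazy) c where "\<alpha> = 0" "two_colouring c" "\<beta> = 0"
      | (lazy_second) c where "\<alpha> = 0" "two_colouring c" "0 < \<beta>" "\<beta> < 1"
      | (stuck_second) c where "\<alpha> = 0" "two_colouring c" "\<beta> = 1"
      using assms(5,6) bipartite_iff_two_colouring by fastforce
    then show ?thesis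
    proof cases
      case aperiodic
      then show ?thesis using convergent_wasserstein_walks_aperiodic assms by blast
    next
      case both_non_lazy
      then show ?thesis using convergent_wasserstein_walks_both_non_lazy assms by simp
    next
      case lazy_second
      then show ?thesis using convergent_wasserstein_walks_lazy_second assms by simp
    next
      case stuck_second
      then show ?thesis
        using convergent_wasserstein_walks_stuck_second_iff assms bipartite_iff_two_colouring by auto
    qed
  qed
qed

end
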